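(* In the setting of Bandit-MFW (defined in the context), assume $\max_{\mathbf x\in\mathcal C}\|\nabla f_t(\mathbf x)\|\le G$ and $\sup_{\mathbf x\in\mathcal C}f_t(\mathbf x)\le M_1$ for all $t$. Let $\mathbf x^*\in\arg\max_{\mathbf x\in\mathcal C}\sum_{t=1}^Tf_t(\mathbf x)$, $\mathbf x^*_\delta\in\arg\max_{\mathbf x\in\mathcal C'}\sum_{t=1}^Tf_t(\mathbf x)$, $\tilde{\mathbf x}^*_\delta=(\mathbf x^*_\delta-\delta\mathbf 1)\oslash(\mathbf 1-\delta\mathbf 1)$ and $\tilde{\mathbf x}_q^{(K)}=(\mathbf x_q^{(K)}-\delta\mathbf 1)\oslash(\mathbf 1-\delta\mathbf 1)$. Then $$\sum_{t=1}^T\frac1ef_t(\mathbf x^* )-\sum_{t=1}^Tf_t(\mathbf y_t)\le L\sum_{q=1}^Q\frac1e\bar F_q(\tilde{\mathbf x}^*_\delta)-L\sum_{q=1}^Q\bar F_q(\tilde{\mathbf x}_q^{(K)})+2M_1KQ+\Big((\sqrt n+1)\frac{r(\mathcal C)}r+\sqrt n+2\Big)TG\delta.$$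
   Context: Notation: $\odot$, $\oslash$ coordinatewise product/division; $\mathbf 0,\mathbf 1$ all-zeros/all-ones vectors; $\|\cdot\|$ Euclidean norm; $B^n$ closed unit ball, $S^{n-1}$ unit sphere; $r(\mathcal C)=\max_{\mathbf x\in\mathcal C}\|\mathbf x\|$. $\mathcal C\subseteq[0,1]^n$ is down-closed convex (i.e. $\mathbf y\in\mathcal C$, $\mathbf 0\le\mathbf x\le\mathbf y$ imply $\mathbf x\in\mathcal C$), $\mathbf 0\in\mathcal C$, and $rB^n_{\ge0}\subseteq\mathcal C$ with $B^n_{\ge0}=B^n\cap\mathbb R^n_+$, $r>0$; $0<\delta<\frac r{\sqrt n+1}$, $\alpha=\frac{(\sqrt n+1)\delta}r$, $\mathcal C'=(1-\alpha)\mathcal C+\delta\mathbf 1$. Each $f_t$ ($t\in[T]$, fixed in advance) is nonnegative, differentiable, DR-submodular ($\nabla f(\mathbf x)\le\nabla f(\mathbf y)$ when $\mathbf x\ge\mathbf y$) and $L_0$-smooth on $[-\delta,1+\delta]^n$. Smoothing: $\hat f_{t,\delta}(\mathbf x)=\mathbb E_{\mathbf v\sim B^n}f_t(\mathbf x+\delta\mathbf v)$ ($\mathbf v$ uniform in $B^n$). $T=LQ$, $K\le L$. Bandit-MFW: oracles $\mathcal E^{(1)},\dots,\mathcal E^{(K)}$ over $\mathcal C'$; blocks $q=1,\dots,Q$ of rounds $(q-1)L+1,\dots,qL$. In block $q$: $\mathbf x_q^{(0)}=\delta\mathbf 1$; for $k\in[K]$, $\mathbf v_q^{(k)}\in\mathcal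 C'$ is the output of $\mathcal E^{(k)}$, $\tilde{\mathbf v}_q^{(k)}=(\mathbf v_q^{(k)}-\delta\mathbf 1)\oslash(\mathbf 1-\delta\mathbf 1)$, $\mathbf x_q^{(k)}=\mathbf x_q^{(k-1)}+\frac1K\tilde{\mathbf v}_q^{(k)}\odot(\mathbf 1-\mathbf x_q^{(k-1)})$; a uniformly random permutation $(t_q^{(1)},\dots,t_q^{(L)})$ of the block's rounds is drawn; in round $t_q^{(k)}$, $k\le K$, play $\mathbf y_t=\mathbf x_q^{(k)}+\delta\mathbf u_q^{(k)}$ with $\mathbf u_q^{(k)}$ uniform on $S^{n-1}$; in other rounds of the block play $\mathbf y_t=\mathbf x_q^{(K)}$; then $\mathbf g_q^{(0)}=\mathbf 0$, $\mathbf g_q^{(k)}=(1-\eta_k)\mathbf g_q^{(k-1)}+\eta_k\frac n\delta f_{t_q^{(k)}}(\mathbf x_q^{(k)}+\delta\mathbf u_q^{(k)})\mathbf u_q^{(k)}$, $\tilde{\mathbf x}_q^{(k)}=(\mathbf x_q^{(k)}-\delta\mathbf 1)\oslash(\mathbf 1-\delta\mathbf 1)$, and $(\mathbf 1-\tilde{\mathbf x}_q^{(k)})\odot\mathbf g_q^{(k)}$ is fed to $\mathcal E^{(k)}$. Block averages: $\bar F_q(\mathbf x)=\frac1L\sum_{m=(q-1)L+1}^{qL}\hat f_{m,\delta}\big((\mathbf 1-\delta\mathbf 1)\odot\mathbf x+\delta\mathbf 1\big)$. *)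

theory Defs
  imports "HOL-Analysis.Analysis"
begin

definition cvec :: "real \<Rightarrow> real^'n" where
  "cvec c = (\<chi> i. c)"

definition hprod :: "real^'n \<Rightarrow> real^'n \<Rightarrow> real^'n" where
  "hprod x y = (\<chi> i. x$i * y$i)"

definition hdiv :: "real^'n \<Rightarrow> real^'n \<Rightarrow> real^'n" where
  "hdiv x y = (\<chi> i. x$i / y$i)"

definition down_closed :: "(real^'n) set \<Rightarrow> bool" where
  "down_closed C \<longleftrightarrow> (\<forall>y\<in>C. \<forall>x. 0 \<le> x \<and> x \<le> y \<longrightarrow> x \<in> C)"

definition radius :: "(real^'n) set \<Rightarrow> real" where
  "radius C = (SUP x\<in>C. norm x)"

definition shrink_set :: "(real^'n) set \<Rightarrow> real \<Rightarrow> real \<Rightarrow> (real^'n) set" where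
  "shrink_set C r \<delta> =
     (let \<alpha> = (sqrt (real CARD('n)) + 1) * \<delta> / r
      in (\<lambda>x. (1 - \<alpha>) *\<^sub>R x + cvec \<delta>) ` C)"

definition smooth :: "real \<Rightarrow> (real^'n \<Rightarrow> real) \<Rightarrow> real^'n \<Rightarrow> real" where
  "smooth \<delta> f x = integral (cball 0 1) (\<lambda>v. f (x + \<delta> *\<^sub>R v)) / measure lborel (cball (0::real^'n) 1)"

definition untilde :: "real \<Rightarrow> real^'n \<Rightarrow> real^'n" where
  "untilde \<delta> z = hdiv (z - cvec \<delta>) (cvec 1 - cvec \<delta>)"

text \<open>Iterates x_q^(k) of Bandit-MFW in block q, given oracle outputs v q k (k = 1..K).\<close>
fun mfw_x :: "nat \<Rightarrow> real \<Rightarrow> (nat \<Rightarrow> nat \<Rightarrow> real^'n) \<Rightarrow> nat \<Rightarrow> nat \<Rightarrow> real^'n" where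
  "mfw_x K \<delta> v q 0 = cvec \<delta>"
| "mfw_x K \<delta> v q (Suc k) =
     mfw_x K \<delta> v q k + (1 / real K) *\<^sub>R hprod (untilde \<delta> (v q (Suc k))) (cvec 1 - mfw_x K \<delta> v q k)"

definition block_avg :: "nat \<Rightarrow> real \<Rightarrow> (nat \<Rightarrow> real^'n \<Rightarrow> real) \<Rightarrow> nat \<Rightarrow> real^'n \<Rightarrow> real" where
  "block_avg L \<delta> f q x =
     (1 / real L) * (\<Sum>m = (q - 1) * L + 1 .. q * L.
        smooth \<delta> (f m) (hprod (cvec 1 - cvec \<delta>) x + cvec \<delta>))"

end

theory Submission
  imports Defs
begin

text \<open>The shrunken set \<open>C' = (1 - \<alpha>) C + \<delta> 1\<close> satisfies \<open>C' + \<delta> B\<^sup>n \<subseteq> C\<close>, so every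
  played point lies in \<open>C\<close>, where each \<open>f\<^sub>t\<close> is \<open>G\<close>-Lipschitz, and smoothing changes
  values at points of \<open>C'\<close> by at most \<open>G \<delta>\<close>. On the comparator side, \<open>x\<^sup>*\<close> is replaced by
  \<open>(1 - \<alpha>) x\<^sup>* + \<delta> 1 \<in> C'\<close> at cost \<open>G (\<alpha> r(C) + \<delta> \<surd>n)\<close> per round, then by the maximiser
  \<open>x\<^sup>*\<^sub>\<delta>\<close> over \<open>C'\<close>, then by the smoothed functions. On the learner side the iterates
  stay in \<open>C'\<close>, so in each block only the \<open>K\<close> exploration rounds can lose more than \<open>G \<delta>\<close>,
  and they lose at most \<open>M\<^sub>1\<close>. The factor \<open>1/e \<le> 1\<close> only scales a nonnegative bound.\<close>

lemma sqrt_card_ge_one: "1 \<le> sqrt (real CARD('n::finite))"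
  by (simp add: Suc_le_eq)

lemma norm_cvec: "norm (cvec c :: real^'n) = \<bar>c\<bar> * sqrt (real CARD('n))"
proof -
  have "norm (cvec c :: real^'n) = sqrt (\<Sum>i\<in>(UNIV::'n set). c\<^sup>2)"
    by (simp add: norm_vec_def L2_set_def cvec_def)
  then show ?thesis by (simp add: real_sqrt_mult)
qed

lemma hprod_untilde:
  assumes "\<delta> \<noteq> 1"
  shows "hprod (cvec 1 - cvec \<delta>) (untilde \<delta> z) + cvec \<delta> = (z::real^'n)"
  using assms by (simp add: vec_eq_iff hprod_def untilde_def hdiv_def cvec_def)

lemma sum_blocks:
  fixes g :: "nat \<Rightarrow> 'a::comm_monoid_add"
  shows "(\<Sum>t=1..L*Q. g t) = (\<Sum>q=1..Q. \<Sum>m=(q-1)*L+1..q*L. g m)"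
proof (induction Q)
  case 0
  then show ?case by simp
next
  case (Suc Q)
  have "(\<Sum>t=1..L*Q + L. g t) = (\<Sum>t=1..L*Q. g t) + (\<Sum>t=L*Q+1..L*Q + L. g t)"
    by (rule sum.ub_add_nat) simp
  then show ?case using Suc by (simp add: algebra_simps)
qed

lemma block_avg_untilde:
  assumes "\<delta> \<noteq> 1" "L \<noteq> 0"
  shows "real L * block_avg L \<delta> f q (untilde \<delta> z) = (\<Sum>m=(q-1)*L+1..q*L. smooth \<delta> (f m) z)"
  using assms by (simp add: block_avg_def hprod_untilde)

lemma sum_block_avg_untilde:
  assumes "\<delta> \<noteq> 1" "L \<noteq> 0"
  shows "real L * (\<Sum>q=1..Q. block_avg L \<delta> f q (untilde \<delta> z)) = (\<Sum>t=1..L*Q. smooth \<delta> (f t) z)"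
  unfolding sum_blocks[of "\<lambda>t. smooth \<delta> (f t) z" L Q]
  using assms by (simp add: sum_distrib_left block_avg_untilde)

lemma sum_le_split_by_bij:
  fixes h :: "nat \<Rightarrow> real"
  assumes \<sigma>: "bij_betw \<sigma> {1..L} I" and "K \<le> L"
    and head: "\<And>k. k \<in> {1..K} \<Longrightarrow> h (\<sigma> k) \<le> a"
    and tail: "\<And>k. k \<in> {K+1..L} \<Longrightarrow> h (\<sigma> k) \<le> b"
  shows "sum h I \<le> real K * a + real (L - K) * b"
proof -
  have "sum h I = (\<Sum>k=1..L. h (\<sigma> k))"
    by (rule sum.reindex_bij_betw[OF \<sigma>, symmetric])
  also have "\<dots> = (\<Sum>k=1..K + (L - K). h (\<sigma> k))"
    using \<open>K \<le> L\<close> by simp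
  also have "\<dots> = (\<Sum>k=1..K. h (\<sigma> k)) + (\<Sum>k=K+1..K + (L - K). h (\<sigma> k))"
    by (rule sum.ub_add_nat) simp
  also have "\<dots> \<le> (\<Sum>k=1..K. a) + (\<Sum>k=K+1..K + (L - K). b)"
    using head tail \<open>K \<le> L\<close> by (intro add_mono sum_mono) auto
  finally show ?thesis by simp
qed

lemma integrable_continuous_cball:
  fixes g :: "real^'n \<Rightarrow> real"
  assumes "continuous_on (cball 0 1) g"
  shows "g integrable_on cball 0 1"
  using borel_integrable_compact[OF compact_cball assms]
  by (simp add: set_borel_integral_eq_integral(1) set_integrable_def)

lemma integral_const_cball:
  "integral (cball (0::real^'n) 1) (\<lambda>x. c) = c * measure lborel (cball (0::real^'n) 1)"
  using integral_mult_right[of "cball (0::real^'n) 1" c "\<lambda>x. 1"]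
    lmeasure_integral[of "cball (0::real^'n) 1"]
  by simp

lemma smooth_le:
  fixes g :: "real^'n \<Rightarrow> real"
  assumes "continuous_on S g" and inS: "\<And>w. norm w \<le> 1 \<Longrightarrow> x + \<delta> *\<^sub>R w \<in> S"
    and ub: "\<And>w. norm w \<le> 1 \<Longrightarrow> g (x + \<delta> *\<^sub>R w) \<le> b"
  shows "smooth \<delta> g x \<le> b"
proof -
  have "continuous_on (cball 0 1) (\<lambda>w. g (x + \<delta> *\<^sub>R w))"
    by (rule continuous_on_compose2[OF assms(1)]) (auto intro!: continuous_intros inS)
  then have "integral (cball 0 1) (\<lambda>w. g (x + \<delta> *\<^sub>R w)) \<le> integral (cball (0::real^'n) 1) (\<lambda>w. b)"
    by (intro integral_le integrable_continuous_cball integrable_on_const) (auto intro: ub)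
  then show ?thesis
    by (simp add: smooth_def integral_const_cball content_cball_pos divide_le_eq)
qed

lemma smooth_ge:
  fixes g :: "real^'n \<Rightarrow> real"
  assumes "continuous_on S g" and "\<And>w. norm w \<le> 1 \<Longrightarrow> x + \<delta> *\<^sub>R w \<in> S"
    and "\<And>w. norm w \<le> 1 \<Longrightarrow> b \<le> g (x + \<delta> *\<^sub>R w)"
  shows "b \<le> smooth \<delta> g x"
proof -
  have "smooth \<delta> (\<lambda>z. - g z) x \<le> - b"
    using assms by (intro smooth_le[of S]) (auto intro: continuous_intros)
  then show ?thesis by (simp add: smooth_def)
qed

lemma gradient_bound_imp_lipschitz:
  fixes g :: "real^'n \<Rightarrow> real"
  assumes "convex C"
    and deriv: "\<And>x. x \<in> C \<Longrightarrow> (g has_derivative (\<lambda>h. d x \<bullet> h)) (at x within C)"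
    and bound: "\<And>x. x \<in> C \<Longrightarrow> norm (d x) \<le> G"
    and "x \<in> C" "z \<in> C"
  shows "\<bar>g x - g z\<bar> \<le> G * norm (x - z)"
proof -
  have "norm (g x - g z) \<le> G * norm (x - z)"
  proof (rule differentiable_bound[OF \<open>convex C\<close> deriv _ \<open>x \<in> C\<close> \<open>z \<in> C\<close>])
    fix w assume "w \<in> C"
    have "onorm (\<lambda>h. d w \<bullet> h) \<le> norm (d w) * onorm (\<lambda>h::real^'n. h)"
      using onorm_inner_right[of "\<lambda>h::real^'n. h" "d w"] bounded_linear_ident by simp
    also have "\<dots> \<le> G"
      using bound[OF \<open>w \<in> C\<close>] onorm_id_le[where 'a="real^'n"]
      by (metis mult.right_neutral mult_left_mono norm_ge_zero order_trans)
    finally show "onorm (\<lambda>h. d w \<bullet> h) \<le> G" .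
  qed
  then show ?thesis by simp
qed

text \<open>In every coordinate, one Frank--Wolfe step moves the iterate up by at most
  \<open>(1 - \<alpha>) c\<^sub>k / K\<close>: the factor \<open>1 - x\<close> is at most \<open>1 - \<delta>\<close>, which cancels the
  denominator of \<open>untilde\<close>.\<close>
lemma mfw_x_component_bounds:
  fixes v :: "nat \<Rightarrow> nat \<Rightarrow> real^'n" and c :: "nat \<Rightarrow> real^'n"
  assumes "\<delta> \<le> \<alpha>" "\<alpha> < 1" "1 \<le> K"
    and v_eq: "\<And>j. j \<in> {1..K} \<Longrightarrow> v q j = (1 - \<alpha>) *\<^sub>R c j + cvec \<delta>"
    and c01: "\<And>j. j \<in> {1..K} \<Longrightarrow> 0 \<le> c j $ i \<and> c j $ i \<le> 1"
  shows "k \<le> K \<Longrightarrow> \<delta> \<le> mfw_x K \<delta> v q k $ i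
    \<and> mfw_x K \<delta> v q k $ i \<le> \<delta> + (1 - \<alpha>) / K * (\<Sum>j=1..k. c j $ i)"
proof (induction k)
  case 0
  then show ?case by (simp add: cvec_def)
next
  case (Suc k)
  let ?a = "mfw_x K \<delta> v q k $ i" and ?c = "c (Suc k) $ i"
  have j: "Suc k \<in> {1..K}" and K: "real K > 0" using Suc.prems \<open>1 \<le> K\<close> by auto
  have IH: "\<delta> \<le> ?a" "?a \<le> \<delta> + (1 - \<alpha>) / K * (\<Sum>j=1..k. c j $ i)"
    using Suc by auto
  have "(\<Sum>j=1..k. c j $ i) \<le> real K"
    using sum_mono[of "{1..k}" "\<lambda>j. c j $ i" "\<lambda>_. 1"] c01 Suc.prems by auto
  then have "(1 - \<alpha>) / K * (\<Sum>j=1..k. c j $ i) \<le> (1 - \<alpha>) / K * K"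
    using \<open>\<alpha> < 1\<close> by (intro mult_left_mono) auto
  then have "(1 - \<alpha>) / K * (\<Sum>j=1..k. c j $ i) \<le> 1 - \<alpha>"
    using K by simp
  then have "?a \<le> 1" using IH \<open>\<delta> \<le> \<alpha>\<close> by linarith
  define \<Delta> where "\<Delta> = (1 - \<alpha>) * ?c / (1 - \<delta>) * (1 - ?a)"
  have step: "mfw_x K \<delta> v q (Suc k) $ i = ?a + \<Delta> / K"
    using v_eq[OF j] by (simp add: \<Delta>_def hprod_def untilde_def hdiv_def cvec_def)
  have "0 \<le> \<Delta>"
    using c01[OF j] \<open>?a \<le> 1\<close> \<open>\<alpha> < 1\<close> \<open>\<delta> \<le> \<alpha>\<close> by (simp add: \<Delta>_def)
  moreover have "\<Delta> \<le> (1 - \<alpha>) * ?c"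
    using c01[OF j] IH(1) \<open>\<alpha> < 1\<close> \<open>\<delta> \<le> \<alpha>\<close>
    by (simp add: \<Delta>_def divide_le_eq mult_left_mono mult_right_mono mult.commute[of _ "1 - _"])
  ultimately have "0 \<le> \<Delta> / K" "\<Delta> / K \<le> (1 - \<alpha>) / K * ?c"
    using K by (simp_all add: divide_right_mono)
  moreover have "(1 - \<alpha>) / K * (\<Sum>j=1..Suc k. c j $ i)
      = (1 - \<alpha>) / K * (\<Sum>j=1..k. c j $ i) + (1 - \<alpha>) / K * ?c"
    by (simp add: distrib_left)
  ultimately show ?case
    using IH unfolding step by linarith
qed

locale shrunken_body =
  fixes C :: "(real^'n) set" and r \<delta> \<alpha> :: real
  assumes C_box: "C \<subseteq> cbox 0 (cvec 1)"
    and C_convex: "convex C"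
    and C_down: "down_closed C"
    and r_pos: "r > 0"
    and C_ball: "{x. norm x \<le> r \<and> 0 \<le> x} \<subseteq> C"
    and \<delta>_pos: "0 < \<delta>"
    and \<delta>_small: "\<delta> < r / (sqrt (real CARD('n)) + 1)"
    and \<alpha>_def: "\<alpha> = (sqrt (real CARD('n)) + 1) * \<delta> / r"
begin

lemma mem_C_unit_interval: "x \<in> C \<Longrightarrow> 0 \<le> x $ i \<and> x $ i \<le> 1"
  using C_box by (auto simp: mem_box_cart cvec_def)

lemma zero_mem_C: "0 \<in> C"
  using C_ball r_pos by auto

lemma r_le_one: "r \<le> 1"
proof -
  fix i :: 'n
  have "norm (r *\<^sub>R axis i (1::real)) \<le> r" "0 \<le> r *\<^sub>R axis i (1::real)"
    using r_pos by (simp, simp add: less_eq_vec_def axis_def)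
  then have "r *\<^sub>R axis i 1 \<in> C"
    using C_ball by auto
  from mem_C_unit_interval[OF this, of i] show ?thesis by (simp add: axis_def)
qed

lemma sqrt_card_plus_one_pos: "0 < sqrt (real CARD('n)) + 1"
  using sqrt_card_ge_one[where 'n='n] by linarith

lemma alpha_pos: "0 < \<alpha>"
  unfolding \<alpha>_def using \<delta>_pos r_pos sqrt_card_plus_one_pos by simp

lemma alpha_lt_one: "\<alpha> < 1"
  using \<delta>_small r_pos sqrt_card_ge_one[where 'n='n]
  by (simp add: \<alpha>_def less_divide_eq mult.commute)

lemma delta_le_alpha: "\<delta> \<le> \<alpha>"
proof -
  have "\<delta> * r \<le> \<delta> * (sqrt (real CARD('n)) + 1)"
    using r_le_one sqrt_card_ge_one[where 'n='n] \<delta>_pos by (intro mult_left_mono) linarith+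
  then show ?thesis using r_pos by (simp add: \<alpha>_def field_simps)
qed

lemma delta_lt_one: "\<delta> < 1"
  using delta_le_alpha alpha_lt_one by simp

lemma mem_shrink_set_iff: "z \<in> shrink_set C r \<delta> \<longleftrightarrow> (\<exists>c\<in>C. z = (1 - \<alpha>) *\<^sub>R c + cvec \<delta>)"
  by (auto simp: shrink_set_def \<alpha>_def)

lemma subset_cbox_enlarged: "C \<subseteq> cbox (cvec (- \<delta>)) (cvec (1 + \<delta>))"
proof
  fix x assume "x \<in> C"
  then have "- \<delta> \<le> x $ i \<and> x $ i \<le> 1 + \<delta>" for i
    using mem_C_unit_interval[of x i] \<delta>_pos by linarith
  then show "x \<in> cbox (cvec (- \<delta>)) (cvec (1 + \<delta>))"
    by (simp add: mem_box_cart cvec_def)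
qed

text \<open>The point \<open>\<delta>(1 + w)/\<alpha>\<close> is nonnegative and has norm at most \<open>r\<close>, so it lies in \<open>C\<close>;
  convexity then puts \<open>(1 - \<alpha>) c + \<delta> 1 + \<delta> w\<close> into \<open>C\<close>.\<close>
lemma shrink_set_add_ball:
  assumes "z \<in> shrink_set C r \<delta>" "norm w \<le> 1"
  shows "z + \<delta> *\<^sub>R w \<in> C"
proof -
  obtain c where c: "c \<in> C" "z = (1 - \<alpha>) *\<^sub>R c + cvec \<delta>"
    using assms(1) mem_shrink_set_iff by auto
  define p where "p = (\<delta> / \<alpha>) *\<^sub>R (cvec 1 + w)"
  have "0 \<le> 1 + w $ i" for i
    using component_le_norm_cart[of w i] assms(2) by linarith
  then have "0 \<le> p"
    using \<delta>_pos alpha_pos by (simp add: p_def less_eq_vec_def cvec_def)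
  have "norm p \<le> (\<delta> / \<alpha>) * (norm (cvec 1 :: real^'n) + norm w)"
    using \<delta>_pos alpha_pos norm_triangle_ineq[of "cvec 1 :: real^'n" w]
    by (simp add: p_def divide_right_mono mult_left_mono)
  also have "\<dots> \<le> (\<delta> / \<alpha>) * (sqrt (real CARD('n)) + 1)"
    using assms(2) \<delta>_pos alpha_pos by (intro mult_left_mono) (auto simp: norm_cvec)
  also have "\<dots> = r"
    using \<delta>_pos r_pos sqrt_card_plus_one_pos by (simp add: \<alpha>_def)
  finally have "p \<in> C"
    using C_ball \<open>0 \<le> p\<close> by auto
  then have "(1 - \<alpha>) *\<^sub>R c + \<alpha> *\<^sub>R p \<in> C"
    using convexD[OF C_convex c(1)] alpha_pos alpha_lt_one by simp
  moreover have "\<alpha> *\<^sub>R p = cvec \<delta> + \<delta> *\<^sub>R w"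
    using alpha_pos by (simp add: p_def vec_eq_iff cvec_def algebra_simps)
  ultimately show ?thesis
    by (simp add: c(2) add.assoc)
qed

lemma shrink_set_subset: "shrink_set C r \<delta> \<subseteq> C"
  using shrink_set_add_ball[of _ 0] by auto

lemma mfw_x_in_shrink_set:
  assumes v_in: "\<And>j. j \<in> {1..K} \<Longrightarrow> v q j \<in> shrink_set C r \<delta>" and "1 \<le> K" "k \<le> K"
  shows "mfw_x K \<delta> v q k \<in> shrink_set C r \<delta>"
proof -
  have "\<forall>j\<in>{1..K}. \<exists>c. c \<in> C \<and> v q j = (1 - \<alpha>) *\<^sub>R c + cvec \<delta>"
    using v_in mem_shrink_set_iff by blast
  then obtain c where c: "\<And>j. j \<in> {1..K} \<Longrightarrow> c j \<in> C \<and> v q j = (1 - \<alpha>) *\<^sub>R c j + cvec \<delta>"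
    by (metis bchoice)
  note bounds = mfw_x_component_bounds[OF delta_le_alpha alpha_lt_one \<open>1 \<le> K\<close>,
      of v q c, OF _ _ \<open>k \<le> K\<close>]
  define e where "e = (\<Sum>j\<in>{1..K}. (1 / real K) *\<^sub>R c j)"
  have "e \<in> C"
    unfolding e_def using \<open>1 \<le> K\<close> c by (intro convex_sum[OF _ C_convex]) auto
  define d where "d = inverse (1 - \<alpha>) *\<^sub>R (mfw_x K \<delta> v q k - cvec \<delta>)"
  have "0 \<le> d $ i \<and> d $ i \<le> e $ i" for i
  proof -
    have x: "\<delta> \<le> mfw_x K \<delta> v q k $ i"
      "mfw_x K \<delta> v q k $ i \<le> \<delta> + (1 - \<alpha>) / K * (\<Sum>j=1..k. c j $ i)"
      using bounds c mem_C_unit_interval by auto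
    have "d $ i = (mfw_x K \<delta> v q k $ i - \<delta>) / (1 - \<alpha>)"
      by (simp add: d_def cvec_def divide_inverse mult.commute)
    then have "0 \<le> d $ i"
      using x(1) alpha_lt_one by simp
    have "d $ i \<le> ((1 - \<alpha>) / K * (\<Sum>j=1..k. c j $ i)) / (1 - \<alpha>)"
      unfolding \<open>d $ i = _\<close> using x(2) alpha_lt_one by (intro divide_right_mono) auto
    then have d_le: "d $ i \<le> (\<Sum>j=1..k. c j $ i) / K"
      using alpha_lt_one by simp
    have "(\<Sum>j=1..k. c j $ i) \<le> (\<Sum>j=1..K. c j $ i)"
      using \<open>k \<le> K\<close> c mem_C_unit_interval by (intro sum_mono2) auto
    then have "(\<Sum>j=1..k. c j $ i) / K \<le> (\<Sum>j=1..K. c j $ i) / K"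
      by (simp add: divide_right_mono)
    also have "\<dots> = e $ i"
      by (simp add: e_def sum_divide_distrib)
    finally have "(\<Sum>j=1..k. c j $ i) / K \<le> e $ i" .
    with \<open>0 \<le> d $ i\<close> d_le show ?thesis by linarith
  qed
  then have "d \<in> C"
    using C_down \<open>e \<in> C\<close> by (auto simp: down_closed_def less_eq_vec_def)
  moreover have "mfw_x K \<delta> v q k = (1 - \<alpha>) *\<^sub>R d + cvec \<delta>"
    using alpha_lt_one by (simp add: d_def)
  ultimately show ?thesis
    using mem_shrink_set_iff by blast
qed

lemma norm_le_radius:
  assumes "x \<in> C"
  shows "norm x \<le> radius C"
proof -
  have "bdd_above (norm ` C)"
    using bounded_subset[OF bounded_cbox C_box] by (auto simp: bounded_iff bdd_above_def)
  then show ?thesis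
    unfolding radius_def by (rule cSUP_upper[OF assms])
qed

lemma radius_nonneg: "0 \<le> radius C"
  using norm_le_radius[OF zero_mem_C] by simp

lemma norm_diff_shrink_le:
  assumes "x \<in> C"
  shows "norm (x - ((1 - \<alpha>) *\<^sub>R x + cvec \<delta>)) \<le> \<alpha> * radius C + \<delta> * sqrt (real CARD('n))"
proof -
  have "norm (x - ((1 - \<alpha>) *\<^sub>R x + cvec \<delta>)) = norm (\<alpha> *\<^sub>R x - cvec \<delta>)"
    by (simp add: algebra_simps)
  also have "\<dots> \<le> \<alpha> * norm x + \<delta> * sqrt (real CARD('n))"
    using norm_triangle_ineq4[of "\<alpha> *\<^sub>R x" "cvec \<delta>"] alpha_pos \<delta>_pos by (simp add: norm_cvec)
  also have "\<dots> \<le> \<alpha> * radius C + \<delta> * sqrt (real CARD('n))"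
    using norm_le_radius[OF assms] alpha_pos by simp
  finally show ?thesis .
qed

context
  fixes g :: "real^'n \<Rightarrow> real" and d :: "real^'n \<Rightarrow> real^'n" and G :: real
  assumes g_deriv: "\<And>x. x \<in> C \<Longrightarrow> (g has_derivative (\<lambda>h. d x \<bullet> h)) (at x within C)"
    and d_bound: "\<And>x. x \<in> C \<Longrightarrow> norm (d x) \<le> G"
begin

lemma continuous_on_C: "continuous_on C g"
  using has_derivative_continuous[OF g_deriv] continuous_on_eq_continuous_within by blast

lemma smooth_shrink_error:
  assumes z: "z \<in> shrink_set C r \<delta>"
  shows "\<bar>smooth \<delta> g z - g z\<bar> \<le> G * \<delta>"
proof -
  have "0 \<le> G"
    using d_bound[OF zero_mem_C] norm_ge_zero order_trans by blast
  have near: "\<bar>g (z + \<delta> *\<^sub>R w) - g z\<bar> \<le> G * \<delta>" if "norm w \<le> 1" for w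
  proof -
    have "\<bar>g (z + \<delta> *\<^sub>R w) - g z\<bar> \<le> G * (\<delta> * norm w)"
      using gradient_bound_imp_lipschitz[OF C_convex g_deriv d_bound
          shrink_set_add_ball[OF z that] shrink_set_subset[THEN subsetD, OF z]] \<delta>_pos
      by simp
    also have "\<dots> \<le> G * \<delta>"
      using \<open>0 \<le> G\<close> \<delta>_pos that by (intro mult_left_mono) (auto simp: mult_left_le)
    finally show ?thesis .
  qed
  have "g z - G * \<delta> \<le> g (z + \<delta> *\<^sub>R w) \<and> g (z + \<delta> *\<^sub>R w) \<le> g z + G * \<delta>"
    if "norm w \<le> 1" for w
    using near[OF that] by linarith
  then have "g z - G * \<delta> \<le> smooth \<delta> g z" and "smooth \<delta> g z \<le> g z + G * \<delta>"
    by (intro smooth_ge[OF continuous_on_C] smooth_le[OF continuous_on_C] shrink_set_add_ball[OF z];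
        blast)+
  then show ?thesis by linarith
qed

lemma smooth_shrink_le:
  assumes "z \<in> shrink_set C r \<delta>" and "\<And>x. x \<in> C \<Longrightarrow> g x \<le> M"
  shows "smooth \<delta> g z \<le> M"
  using assms shrink_set_add_ball by (intro smooth_le[OF continuous_on_C]) auto

end

end

locale bandit_mfw = shrunken_body C r \<delta> \<alpha>
  for C :: "(real^'n) set" and r \<delta> \<alpha> :: real +
  fixes L Q K :: nat and G M :: real
    and f :: "nat \<Rightarrow> real^'n \<Rightarrow> real" and grad :: "nat \<Rightarrow> real^'n \<Rightarrow> real^'n"
    and v :: "nat \<Rightarrow> nat \<Rightarrow> real^'n" and \<sigma> :: "nat \<Rightarrow> nat \<Rightarrow> nat"
    and u :: "nat \<Rightarrow> nat \<Rightarrow> real^'n" and y :: "nat \<Rightarrow> real^'n"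
  assumes Q_pos: "1 \<le> Q" and K_pos: "1 \<le> K" and K_le: "K \<le> L"
    and f_deriv: "\<And>t x. t \<in> {1..L*Q} \<Longrightarrow> x \<in> C \<Longrightarrow>
        (f t has_derivative (\<lambda>h. grad t x \<bullet> h)) (at x within C)"
    and grad_bound: "\<And>t x. t \<in> {1..L*Q} \<Longrightarrow> x \<in> C \<Longrightarrow> norm (grad t x) \<le> G"
    and f_nonneg: "\<And>t x. t \<in> {1..L*Q} \<Longrightarrow> x \<in> C \<Longrightarrow> 0 \<le> f t x"
    and f_bound: "\<And>t x. t \<in> {1..L*Q} \<Longrightarrow> x \<in> C \<Longrightarrow> f t x \<le> M"
    and v_in: "\<And>q k. q \<in> {1..Q} \<Longrightarrow> k \<in> {1..K} \<Longrightarrow> v q k \<in> shrink_set C r \<delta>"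
    and \<sigma>_perm: "\<And>q. q \<in> {1..Q} \<Longrightarrow> bij_betw (\<sigma> q) {1..L} {(q - 1) * L + 1 .. q * L}"
    and u_sphere: "\<And>q k. q \<in> {1..Q} \<Longrightarrow> k \<in> {1..K} \<Longrightarrow> u q k \<in> sphere 0 1"
    and y_explore: "\<And>q k. q \<in> {1..Q} \<Longrightarrow> k \<in> {1..K} \<Longrightarrow>
        y (\<sigma> q k) = mfw_x K \<delta> v q k + \<delta> *\<^sub>R u q k"
    and y_exploit: "\<And>q k. q \<in> {1..Q} \<Longrightarrow> k \<in> {K+1..L} \<Longrightarrow>
        y (\<sigma> q k) = mfw_x K \<delta> v q K"
begin

lemma one_mem_rounds: "1 \<in> {1..L*Q}"
  using Q_pos K_pos K_le by simp

lemma G_nonneg: "0 \<le> G"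
  using grad_bound[OF one_mem_rounds zero_mem_C] norm_ge_zero order_trans by blast

lemma M_nonneg: "0 \<le> M"
  using f_nonneg[OF one_mem_rounds zero_mem_C] f_bound[OF one_mem_rounds zero_mem_C] by linarith

lemma block_subset_rounds: "q \<in> {1..Q} \<Longrightarrow> {(q - 1) * L + 1 .. q * L} \<subseteq> {1..L*Q}"
  by (auto simp: mult.commute intro: order_trans)

lemma played_point_in_C:
  assumes "q \<in> {1..Q}" "k \<in> {1..K}"
  shows "y (\<sigma> q k) \<in> C"
  using y_explore[OF assms] u_sphere[OF assms] assms K_pos
    shrink_set_add_ball mfw_x_in_shrink_set[where v=v and q=q, OF v_in[OF assms(1)]]
  by auto

lemma comparator_gap:
  assumes xstar_in: "xstar \<in> C" and xstar\<delta>_in: "xstar\<delta> \<in> shrink_set C r \<delta>"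
    and xstar\<delta>_max: "\<And>x. x \<in> shrink_set C r \<delta> \<Longrightarrow>
        (\<Sum>t=1..L*Q. f t x) \<le> (\<Sum>t=1..L*Q. f t xstar\<delta>)"
  shows "(\<Sum>t=1..L*Q. f t xstar) - (\<Sum>t=1..L*Q. smooth \<delta> (f t) xstar\<delta>)
    \<le> real (L*Q) * G * (\<alpha> * radius C + \<delta> * sqrt (real CARD('n)) + \<delta>)"
proof -
  define x' where "x' = (1 - \<alpha>) *\<^sub>R xstar + cvec \<delta>"
  have x': "x' \<in> shrink_set C r \<delta>"
    using xstar_in mem_shrink_set_iff by (auto simp: x'_def)
  define E where "E = G * (\<alpha> * radius C + \<delta> * sqrt (real CARD('n)) + \<delta>)"
  have per_round: "f t xstar - smooth \<delta> (f t) xstar\<delta> \<le> (f t x' - f t xstar\<delta>) + E"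
    if t: "t \<in> {1..L*Q}" for t
  proof -
    have "f t xstar - f t x' \<le> G * norm (xstar - x')"
      using gradient_bound_imp_lipschitz[OF C_convex f_deriv[OF t] grad_bound[OF t] xstar_in
          shrink_set_subset[THEN subsetD, OF x']] by simp
    also have "\<dots> \<le> G * (\<alpha> * radius C + \<delta> * sqrt (real CARD('n)))"
      using norm_diff_shrink_le[OF xstar_in] G_nonneg by (simp add: x'_def mult_left_mono)
    finally show ?thesis
      using smooth_shrink_error[OF f_deriv[OF t] grad_bound[OF t] xstar\<delta>_in]
      by (simp add: E_def algebra_simps)
  qed
  have "(\<Sum>t=1..L*Q. f t xstar) - (\<Sum>t=1..L*Q. smooth \<delta> (f t) xstar\<delta>)
      = (\<Sum>t=1..L*Q. f t xstar - smooth \<delta> (f t) xstar\<delta>)"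
    by (simp add: sum_subtractf)
  also have "\<dots> \<le> (\<Sum>t=1..L*Q. (f t x' - f t xstar\<delta>) + E)"
    by (rule sum_mono) (rule per_round)
  also have "\<dots> = (\<Sum>t=1..L*Q. f t x') - (\<Sum>t=1..L*Q. f t xstar\<delta>) + real (L*Q) * E"
    by (simp add: sum.distrib sum_subtractf)
  also have "\<dots> \<le> real (L*Q) * E"
    using xstar\<delta>_max[OF x'] by simp
  finally show ?thesis
    by (simp add: E_def mult.assoc)
qed

lemma block_gap:
  assumes q: "q \<in> {1..Q}"
  shows "(\<Sum>m=(q-1)*L+1..q*L. smooth \<delta> (f m) (mfw_x K \<delta> v q K) - f m (y m))
    \<le> real K * M + real L * G * \<delta>"
proof -
  let ?X = "mfw_x K \<delta> v q K"
  have X: "?X \<in> shrink_set C r \<delta>"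
    using mfw_x_in_shrink_set[where v=v and q=q, OF v_in[OF q] K_pos] by simp
  have round: "\<sigma> q k \<in> {1..L*Q}" if "k \<in> {1..L}" for k
    using bij_betwE[OF \<sigma>_perm[OF q]] block_subset_rounds[OF q] that by blast
  have "(\<Sum>m=(q-1)*L+1..q*L. smooth \<delta> (f m) ?X - f m (y m)) \<le> real K * M + real (L - K) * (G * \<delta>)"
  proof (rule sum_le_split_by_bij[OF \<sigma>_perm[OF q] K_le])
    fix k assume k: "k \<in> {1..K}"
    then have t: "\<sigma> q k \<in> {1..L*Q}" using round K_le by auto
    have "smooth \<delta> (f (\<sigma> q k)) ?X \<le> M"
      using smooth_shrink_le[OF f_deriv[OF t] grad_bound[OF t] X f_bound[OF t]] .
    moreover have "0 \<le> f (\<sigma> q k) (y (\<sigma> q k))"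
      using f_nonneg[OF t played_point_in_C[OF q k]] .
    ultimately show "smooth \<delta> (f (\<sigma> q k)) ?X - f (\<sigma> q k) (y (\<sigma> q k)) \<le> M"
      by linarith
  next
    fix k assume k: "k \<in> {K+1..L}"
    then have t: "\<sigma> q k \<in> {1..L*Q}" using round by auto
    show "smooth \<delta> (f (\<sigma> q k)) ?X - f (\<sigma> q k) (y (\<sigma> q k)) \<le> G * \<delta>"
      using smooth_shrink_error[OF f_deriv[OF t] grad_bound[OF t] X]
      by (simp add: y_exploit[OF q k] abs_le_iff)
  qed
  also have "\<dots> \<le> real K * M + real L * (G * \<delta>)"
    using G_nonneg \<delta>_pos by (intro add_left_mono mult_right_mono) auto
  finally show ?thesis by (simp add: mult.assoc)
qed

lemma discounted_comparator_gap:
  assumes "xstar \<in> C" "xstar\<delta> \<in> shrink_set C r \<delta>"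
    and "\<And>x. x \<in> shrink_set C r \<delta> \<Longrightarrow> (\<Sum>t=1..L*Q. f t x) \<le> (\<Sum>t=1..L*Q. f t xstar\<delta>)"
  shows "(\<Sum>t=1..L*Q. (1 / exp 1) * f t xstar)
      - real L * (\<Sum>q=1..Q. (1 / exp 1) * block_avg L \<delta> f q (untilde \<delta> xstar\<delta>))
    \<le> real (L*Q) * G * (\<alpha> * radius C + \<delta> * sqrt (real CARD('n)) + \<delta>)"
proof -
  define E where "E = real (L*Q) * G * (\<alpha> * radius C + \<delta> * sqrt (real CARD('n)) + \<delta>)"
  have "0 \<le> E"
    using G_nonneg radius_nonneg alpha_pos \<delta>_pos by (simp add: E_def)
  then have gap: "(1 / exp 1) * (\<Sum>t=1..L*Q. f t xstar)
      - (1 / exp 1) * (\<Sum>t=1..L*Q. smooth \<delta> (f t) xstar\<delta>) \<le> E"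
    using mult_left_mono[OF comparator_gap[OF assms], of "1 / exp 1"]
      mult_left_le_one_le[of E "1 / exp 1"]
    by (simp add: E_def right_diff_distrib)
  have "real L * (\<Sum>q=1..Q. block_avg L \<delta> f q (untilde \<delta> xstar\<delta>))
      = (\<Sum>t=1..L*Q. smooth \<delta> (f t) xstar\<delta>)"
    using delta_lt_one K_pos K_le by (intro sum_block_avg_untilde) auto
  then have avg: "real L * (\<Sum>q=1..Q. (1 / exp 1) * block_avg L \<delta> f q (untilde \<delta> xstar\<delta>))
      = (1 / exp 1) * (\<Sum>t=1..L*Q. smooth \<delta> (f t) xstar\<delta>)"
    by (metis sum_distrib_left mult.left_commute)
  have "(\<Sum>t=1..L*Q. (1 / exp 1) * f t xstar) = (1 / exp 1) * (\<Sum>t=1..L*Q. f t xstar)"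
    by (rule sum_distrib_left[symmetric])
  then show ?thesis
    using gap unfolding avg E_def by linarith
qed

lemma exploration_gap:
  "real L * (\<Sum>q=1..Q. block_avg L \<delta> f q (untilde \<delta> (mfw_x K \<delta> v q K)))
    - (\<Sum>t=1..L*Q. f t (y t)) \<le> real Q * (real K * M + real L * G * \<delta>)"
proof -
  have "real L * (\<Sum>q=1..Q. block_avg L \<delta> f q (untilde \<delta> (mfw_x K \<delta> v q K)))
      - (\<Sum>t=1..L*Q. f t (y t))
      = (\<Sum>q=1..Q. \<Sum>m=(q-1)*L+1..q*L. smooth \<delta> (f m) (mfw_x K \<delta> v q K) - f m (y m))"
    unfolding sum_blocks[of "\<lambda>t. f t (y t)" L Q]
    using delta_lt_one K_pos K_le by (simp add: sum_distrib_left block_avg_untilde sum_subtractf)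
  also have "\<dots> \<le> (\<Sum>q=1..Q. real K * M + real L * G * \<delta>)"
    by (rule sum_mono) (rule block_gap)
  finally show ?thesis by simp
qed

end

theorem mainTheorem11:
  fixes C :: "(real^'n) set"
    and r \<delta> L0 G M1 :: real
    and L Q K :: nat
    and f :: "nat \<Rightarrow> real^'n \<Rightarrow> real"
    and grad :: "nat \<Rightarrow> real^'n \<Rightarrow> real^'n"
    and v :: "nat \<Rightarrow> nat \<Rightarrow> real^'n"
    and \<sigma> :: "nat \<Rightarrow> nat \<Rightarrow> nat"
    and u :: "nat \<Rightarrow> nat \<Rightarrow> real^'n"
    and y :: "nat \<Rightarrow> real^'n"
    and xstar xstar\<delta> :: "real^'n"
  assumes C_box: "C \<subseteq> cbox 0 (cvec 1)"
    and C_convex: "convex C"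
    and C_down: "down_closed C"
    and C_zero: "0 \<in> C"
    and r_pos: "r > 0"
    and C_ball: "{x. norm x \<le> r \<and> 0 \<le> x} \<subseteq> C"
    and \<delta>_pos: "0 < \<delta>"
    and \<delta>_small: "\<delta> < r / (sqrt (real CARD('n)) + 1)"
    and K_pos: "1 \<le> K" and K_le: "K \<le> L"
    and f_nonneg: "\<And>t x. t \<in> {1..L*Q} \<Longrightarrow> x \<in> cbox (cvec (-\<delta>)) (cvec (1+\<delta>)) \<Longrightarrow> 0 \<le> f t x"
    and f_deriv: "\<And>t x. t \<in> {1..L*Q} \<Longrightarrow> x \<in> cbox (cvec (-\<delta>)) (cvec (1+\<delta>)) \<Longrightarrow>
        (f t has_derivative (\<lambda>h. grad t x \<bullet> h)) (at x within cbox (cvec (-\<delta>)) (cvec (1+\<delta>)))"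
    and f_DR: "\<And>t x z. t \<in> {1..L*Q} \<Longrightarrow> x \<in> cbox (cvec (-\<delta>)) (cvec (1+\<delta>)) \<Longrightarrow>
        z \<in> cbox (cvec (-\<delta>)) (cvec (1+\<delta>)) \<Longrightarrow> z \<le> x \<Longrightarrow> grad t x \<le> grad t z"
    and f_smooth: "\<And>t x z. t \<in> {1..L*Q} \<Longrightarrow> x \<in> cbox (cvec (-\<delta>)) (cvec (1+\<delta>)) \<Longrightarrow>
        z \<in> cbox (cvec (-\<delta>)) (cvec (1+\<delta>)) \<Longrightarrow> norm (grad t x - grad t z) \<le> L0 * norm (x - z)"
    and grad_bound: "\<And>t x. t \<in> {1..L*Q} \<Longrightarrow> x \<in> C \<Longrightarrow> norm (grad t x) \<le> G"
    and f_bound: "\<And>t x. t \<in> {1..L*Q} \<Longrightarrow> x \<in> C \<Longrightarrow> f t x \<le> M1"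
    and v_in: "\<And>q k. q \<in> {1..Q} \<Longrightarrow> k \<in> {1..K} \<Longrightarrow> v q k \<in> shrink_set C r \<delta>"
    and \<sigma>_perm: "\<And>q. q \<in> {1..Q} \<Longrightarrow> bij_betw (\<sigma> q) {1..L} {(q - 1) * L + 1 .. q * L}"
    and u_sphere: "\<And>q k. q \<in> {1..Q} \<Longrightarrow> k \<in> {1..K} \<Longrightarrow> u q k \<in> sphere 0 1"
    and y_explore: "\<And>q k. q \<in> {1..Q} \<Longrightarrow> k \<in> {1..K} \<Longrightarrow>
        y (\<sigma> q k) = mfw_x K \<delta> v q k + \<delta> *\<^sub>R u q k"
    and y_exploit: "\<And>q k. q \<in> {1..Q} \<Longrightarrow> k \<in> {K+1..L} \<Longrightarrow>
        y (\<sigma> q k) = mfw_x K \<delta> v q K"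
    and xstar_in: "xstar \<in> C"
    and xstar_max: "\<And>x. x \<in> C \<Longrightarrow> (\<Sum>t=1..L*Q. f t x) \<le> (\<Sum>t=1..L*Q. f t xstar)"
    and xstar\<delta>_in: "xstar\<delta> \<in> shrink_set C r \<delta>"
    and xstar\<delta>_max: "\<And>x. x \<in> shrink_set C r \<delta> \<Longrightarrow> (\<Sum>t=1..L*Q. f t x) \<le> (\<Sum>t=1..L*Q. f t xstar\<delta>)"
  shows "(\<Sum>t=1..L*Q. (1 / exp 1) * f t xstar) - (\<Sum>t=1..L*Q. f t (y t))
    \<le> real L * (\<Sum>q=1..Q. (1 / exp 1) * block_avg L \<delta> f q (untilde \<delta> xstar\<delta>))
      - real L * (\<Sum>q=1..Q. block_avg L \<delta> f q (untilde \<delta> (mfw_x K \<delta> v q K)))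
      + 2 * M1 * real K * real Q
      + ((sqrt (real CARD('n)) + 1) * radius C / r + sqrt (real CARD('n)) + 2) * real (L*Q) * G * \<delta>"
proof (cases "Q = 0")
  case False
  define \<alpha> where "\<alpha> = (sqrt (real CARD('n)) + 1) * \<delta> / r"
  have body: "shrunken_body C r \<delta> \<alpha>"
    using C_box C_convex C_down r_pos C_ball \<delta>_pos \<delta>_small by unfold_locales (simp_all add: \<alpha>_def)
  interpret shrunken_body C r \<delta> \<alpha> by (rule body)
  have "bandit_mfw_axioms C r \<delta> L Q K G M1 f grad v \<sigma> u y"
    using False K_pos K_le grad_bound f_bound v_in \<sigma>_perm u_sphere y_explore y_exploit
      f_nonneg[OF _ subset_cbox_enlarged[THEN subsetD]]
      has_derivative_subset[OF f_deriv[OF _ subset_cbox_enlarged[THEN subsetD]] subset_cbox_enlarged]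
    by unfold_locales auto
  then interpret bandit_mfw C r \<delta> \<alpha> L Q K G M1 f grad v \<sigma> u y
    using body by (intro bandit_mfw.intro)
  have "real (L*Q) * G * (\<alpha> * radius C + \<delta> * sqrt (real CARD('n)) + \<delta>)
      + real Q * (real L * G * \<delta>)
    = ((sqrt (real CARD('n)) + 1) * radius C / r + sqrt (real CARD('n)) + 2) * real (L*Q) * G * \<delta>"
    using r_pos by (simp add: \<alpha>_def field_simps)
  moreover have "real Q * (real K * M1) \<le> 2 * M1 * real K * real Q"
    using M_nonneg by simp
  ultimately show ?thesis
    using discounted_comparator_gap[OF xstar_in xstar\<delta>_in xstar\<delta>_max]
      exploration_gap[unfolded distrib_left] by linarith
qed simp

end
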